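(* Let $\Pi$ be a set of primes containing at least two distinct primes, and let $\tau>2$ be a real number. Then the set $W^*_\tau(\Pi)$ contains uncountably many Liouville numbers.
   Context: For a set $\Pi$ of primes, let $Q(\Pi)$ be the set of positive integers divisible by no prime in $\Pi$. When $\Pi$ is finite, $Q(\Pi)$ is the set of positive integers coprime to $\prod_{\pi\in\Pi}\pi$. $W^*_\tau(\Pi)$ is the set of real $x$ satisfying both of the following: \begin{itemize} \item there are infinitely many integers $q\ge1$ with $q\notin Q(\Pi)$ for which some integer $p$ satisfies $|x-p/q|<q^{-\tau}$; \item there are only finitely many $q\in Q(\Pi)$ for which some integer $p$ satisfies $|x-p/q|<q^{-\tau}$. \end{itemize} A Liouville number is an irrational real $x$ such that for every $k>0$ there exist integers $p$ and $q\ge2$ with $0<|x-p/q|<q^{-k}$. *)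

theory Defs
  imports "HOL-Analysis.Analysis"
begin

definition Qset :: "nat set \<Rightarrow> nat set" where
  "Qset P = {q. q \<ge> 1 \<and> (\<forall>p\<in>P. \<not> p dvd q)}"

definition approx_den :: "real \<Rightarrow> real \<Rightarrow> nat \<Rightarrow> bool" where
  "approx_den tau x q \<longleftrightarrow> (\<exists>p::int. \<bar>x - real_of_int p / real q\<bar> < real q powr (- tau))"

definition W_star :: "real \<Rightarrow> nat set \<Rightarrow> real set" where
  "W_star tau P = {x. infinite {q. q \<ge> 1 \<and> q \<notin> Qset P \<and> approx_den tau x q}
                      \<and> finite {q. q \<in> Qset P \<and> approx_den tau x q}}"

definition liouville_number :: "real \<Rightarrow> bool" where
  "liouville_number x \<longleftrightarrow> x \<notin> \<rat> \<and>
     (\<forall>k::real. k > 0 \<longrightarrow> (\<exists>p::int. \<exists>q::int. q \<ge> 2 \<and>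
        0 < \<bar>x - real_of_int p / real_of_int q\<bar> \<and>
        \<bar>x - real_of_int p / real_of_int q\<bar> < real_of_int q powr (- k)))"

end

theory Submission imports Defs begin

(*
  Fix one prime p in \<Pi> (a single prime suffices) and write \<tau> = \<sigma> + 1 with \<sigma> > 1.
  To every 0/1-sequence d we attach the lacunary series
        x_d = \<Sum>_k c_k / p^(e_k),     c_k \<in> {1, p + 1} chosen by d_k,
  where the exponents e_k grow super-exponentially: e_(k+1) = (M + k + 1)(e_k + 6) with M
  large in terms of \<sigma>.  The k-th partial sum is A_k / p^(e_k) with A_k \<equiv> 1 (mod p), and the
  tail is of size about p^(-e_(k+1)).  This yields:
   - x_d is irrational and Liouville, and infinitely many multiples of p are \<tau>-approximating
     denominators (the tails are smaller than any fixed power of p^(-e_k));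
   - a fraction b/s with p not dividing s and s \<ge> 2p never approximates x_d to order s^(-\<tau>):
     it differs from the partial sum A_k/p^(e_k) by at least 1/(s p^(e_k)), and for the index k
     with p^(e_k) \<approx> s^\<sigma> both the error s^(-\<tau>) and the tail are smaller than that;
   - d \<mapsto> x_d is injective, since the k-th digit dominates all later ones.
*)

lemma uncountable_nat_bool: "uncountable (UNIV :: (nat \<Rightarrow> bool) set)"
proof
  assume "countable (UNIV :: (nat \<Rightarrow> bool) set)"
  then obtain g :: "(nat \<Rightarrow> bool) \<Rightarrow> nat" where g: "inj g" by (metis countableE)
  define D where "D = (\<lambda>n. \<not> inv g n n)"
  have "inv g (g D) = D" using g by simp
  then have "inv g (g D) (g D) = D (g D)" by simp
  then show False unfolding D_def by simp
qed

lemma fraction_separation: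
  fixes c A :: int and e N :: nat
  assumes "e > 0" "N > 0" "real_of_int c / real e \<noteq> real_of_int A / real N"
  shows "1 / (real e * real N) \<le> \<bar>real_of_int c / real e - real_of_int A / real N\<bar>"
proof -
  define z where "z = c * int N - A * int e"
  have diff: "real_of_int c / real e - real_of_int A / real N = real_of_int z / (real e * real N)"
    unfolding z_def using assms by (simp add: field_simps)
  have "z \<noteq> 0"
  proof
    assume "z = 0"
    then have "real_of_int c * real N = real_of_int A * real e" unfolding z_def
      by (metis eq_iff_diff_eq_0 of_int_eq_iff of_int_mult of_int_of_nat_eq)
    then show False using assms by (simp add: field_simps)
  qed
  then have "1 \<le> \<bar>real_of_int z\<bar>" by linarith
  with diff show ?thesis using assms by (simp add: abs_div divide_right_mono)
qed

section \<open>The exponent sequence\<close>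

text \<open>The exponents \<open>e_k\<close> of the lacunary series; the parameter \<open>M\<close> controls the growth
  ratio \<open>e_(k+1)/e_k \<ge> M\<close>, while the growing factor \<open>k\<close> makes the ratio tend to infinity.\<close>
fun expn :: "nat \<Rightarrow> nat \<Rightarrow> nat" where
  "expn M 0 = 1"
| "expn M (Suc k) = (M + k + 1) * (expn M k + 6)"

declare expn.simps(2)[simp del]

lemma expn_Suc_ge: "m \<le> M + k + 1 \<Longrightarrow> m * (expn M k + 6) \<le> expn M (Suc k)"
  unfolding expn.simps(2) by (rule mult_right_mono) auto

lemma expn_pos: "expn M k \<ge> 1"
  by (cases k) (auto intro: order.trans[OF _ expn_Suc_ge[of 1]])

lemma expn_step: "expn M k + 6 + k \<le> expn M (Suc k)"
proof -
  have "(k + 1) * (expn M k + 6) \<le> expn M (Suc k)" by (rule expn_Suc_ge) simp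
  moreover have "expn M k + 6 + k \<le> (k + 1) * (expn M k + 6)" by simp
  ultimately show ?thesis by linarith
qed

lemma expn_mono: "j \<le> k \<Longrightarrow> expn M j + (k - j) \<le> expn M k"
proof (induction k)
  case 0 then show ?case by simp
next
  case (Suc k)
  show ?case
  proof (cases "j \<le> k")
    case True
    then show ?thesis using Suc expn_step[of M k] by (simp add: Suc_diff_le)
  next
    case False
    then show ?thesis using Suc by (simp add: le_Suc_eq)
  qed
qed

lemma expn_ge: "k \<le> expn M k"
  using expn_mono[of 0 k M] by simp

lemma expn_strict: "j < k \<Longrightarrow> expn M j < expn M k"
  using expn_mono[of j k M] by simp

text \<open>The ratio \<open>e_(j+1)/e_j\<close> eventually exceeds every bound \<open>\<kappa>\<close>, with room to spare; this
  is what makes the numbers Liouville.\<close>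
lemma expn_eventually_large:
  assumes "kap \<ge> 0" "real j \<ge> kap"
  shows "kap * real (expn M j) + 3 < real (expn M (Suc j))"
proof -
  have "real ((j + 1) * (expn M j + 6)) \<le> real (expn M (Suc j))"
    unfolding of_nat_le_iff by (rule expn_Suc_ge) simp
  then have "(real j + 1) * (real (expn M j) + 6) \<le> real (expn M (Suc j))"
    by (simp add: algebra_simps)
  moreover have "(kap + 1) * (real (expn M j) + 6) \<le> (real j + 1) * (real (expn M j) + 6)"
    using assms by (intro mult_right_mono) auto
  moreover have "kap * real (expn M j) + 3 < (kap + 1) * (real (expn M j) + 6)"
    using assms expn_pos[of M j] by (simp add: algebra_simps)
  ultimately show ?thesis by linarith
qed

section \<open>The lacunary series attached to a 0/1-sequence\<close>

locale lacunary_series =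
  fixes p M :: nat
  assumes prime_p: "prime p"
begin

lemma p_ge_2: "p \<ge> 2" using prime_p prime_ge_2_nat by blast

lemma pow_ge_2pow: "(2::real) ^ m \<le> real p ^ m"
  using p_ge_2 by (intro power_mono) auto

text \<open>The digits are \<open>1\<close> or \<open>p + 1\<close>; both are \<open>\<equiv> 1 (mod p)\<close>, so no partial-sum numerator is
  divisible by \<open>p\<close>, yet two distinct digits differ by \<open>p\<close>.\<close>
definition digit :: "bool \<Rightarrow> nat" where "digit b = (if b then p + 1 else 1)"

definition summand :: "(nat \<Rightarrow> bool) \<Rightarrow> nat \<Rightarrow> real" where
  "summand d j = real (digit (d j)) / real p ^ expn M j"

definition xval :: "(nat \<Rightarrow> bool) \<Rightarrow> real" where "xval d = suminf (summand d)"

definition partial :: "(nat \<Rightarrow> bool) \<Rightarrow> nat \<Rightarrow> real" where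
  "partial d k = (\<Sum>j<Suc k. summand d j)"

definition tail :: "(nat \<Rightarrow> bool) \<Rightarrow> nat \<Rightarrow> real" where
  "tail d k = (\<Sum>i. summand d (i + Suc k))"

fun numer :: "(nat \<Rightarrow> bool) \<Rightarrow> nat \<Rightarrow> nat" where
  "numer d 0 = digit (d 0)"
| "numer d (Suc k) = numer d k * p ^ (expn M (Suc k) - expn M k) + digit (d (Suc k))"

definition denom :: "nat \<Rightarrow> nat" where "denom k = p ^ expn M k"

lemma digit_mod: "digit b mod p = 1"
  using p_ge_2 mod_add_self1[of p 1] unfolding digit_def by (cases b) auto

lemma summand_pos: "0 < summand d j"
  unfolding summand_def digit_def using p_ge_2 by auto

lemma summand_le: "summand d j \<le> 2 * p / real p ^ expn M j"
  unfolding summand_def digit_def using p_ge_2 by (intro divide_right_mono) auto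

lemma summand_le_geometric:
  "summand d (i + j) \<le> 2 * p / real p ^ expn M j * (1/2) ^ i"
proof -
  have "expn M j + i \<le> expn M (i + j)" using expn_mono[of j "i + j" M] by simp
  then have "real p ^ (expn M j + i) \<le> real p ^ expn M (i + j)"
    using p_ge_2 by (intro power_increasing) auto
  moreover have "real p ^ expn M j * 2 ^ i \<le> real p ^ (expn M j + i)"
    using pow_ge_2pow[of i] p_ge_2 by (simp add: power_add mult_left_mono)
  ultimately have pow: "real p ^ expn M j * 2 ^ i \<le> real p ^ expn M (i + j)" by linarith
  have "summand d (i + j) \<le> 2 * p / real p ^ expn M (i + j)" by (rule summand_le)
  also have "\<dots> \<le> 2 * p / (real p ^ expn M j * 2 ^ i)"
    using pow p_ge_2 by (intro divide_left_mono) auto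
  also have "\<dots> = 2 * p / real p ^ expn M j * (1/2) ^ i" by (simp add: power_divide)
  finally show ?thesis .
qed

lemma summable_shifted: "summable (\<lambda>i. summand d (i + j))"
proof (rule summable_comparison_test)
  show "\<exists>N. \<forall>i\<ge>N. norm (summand d (i + j)) \<le> 2 * p / real p ^ expn M j * (1/2) ^ i"
    using summand_le_geometric summand_pos by (auto intro!: exI[of _ 0] simp: less_imp_le)
qed (intro summable_mult summable_geometric, simp)

lemma xval_split: "xval d = partial d k + tail d k"
  unfolding xval_def tail_def partial_def
  using suminf_split_initial_segment[OF summable_shifted[of d 0], of "Suc k"] by simp

lemma tail_pos: "0 < tail d k"
  unfolding tail_def using summable_shifted[of d "Suc k"] summand_pos by (intro suminf_pos) auto

lemma tail_le: "tail d k \<le> 4 * p / real p ^ expn M (Suc k)"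
proof -
  define c where "c = 2 * p / real p ^ expn M (Suc k)"
  have "tail d k \<le> (\<Sum>i. c * (1/2) ^ i)" unfolding tail_def
    by (rule suminf_le[OF _ summable_shifted summable_mult[OF summable_geometric]])
       (use summand_le_geometric[of d _ "Suc k"] in \<open>auto simp: c_def\<close>)
  also have "\<dots> = c * 2" by (simp add: suminf_mult suminf_geometric)
  also have "\<dots> = 4 * p / real p ^ expn M (Suc k)" unfolding c_def by simp
  finally show ?thesis .
qed

lemma partial_eq: "partial d k = real (numer d k) / real (denom k)"
  unfolding denom_def of_nat_power
proof (induction k)
  case 0 then show ?case by (simp add: partial_def summand_def)
next
  case (Suc k)
  have "expn M k \<le> expn M (Suc k)" using expn_strict[of k "Suc k" M] by simp
  then have pk: "real p ^ expn M (Suc k) = real p ^ (expn M (Suc k) - expn M k) * real p ^ expn M k"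
    by (simp flip: power_add)
  have "partial d (Suc k) = real (numer d k) / real p ^ expn M k + summand d (Suc k)"
    using Suc unfolding partial_def by simp
  also have "\<dots> = real (numer d (Suc k)) / real p ^ expn M (Suc k)"
    using p_ge_2 unfolding summand_def pk by (simp add: field_simps)
  finally show ?case .
qed

lemma xval_minus_partial:
  "\<bar>xval d - real_of_int (int (numer d k)) / real (denom k)\<bar> = tail d k"
  using xval_split[of d k] partial_eq[of d k] tail_pos[of d k] by simp

lemma numer_not_dvd: "\<not> p dvd numer d k"
proof (cases k)
  case 0 then show ?thesis using digit_mod[of "d 0"] p_ge_2 by (auto simp: dvd_eq_mod_eq_0)
next
  case (Suc k')
  have "p dvd p ^ (expn M (Suc k') - expn M k')" using expn_strict[of k' "Suc k'" M] by simp
  then have "numer d k mod p = 1"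
    using Suc digit_mod by (simp add: mod_add_left_eq[symmetric])
  then show ?thesis using p_ge_2 by (auto simp: dvd_eq_mod_eq_0)
qed

lemma denom_pos: "denom k > 0" unfolding denom_def using p_ge_2 by simp

lemma denom_gt: "denom k > k"
proof -
  have "2 ^ k \<le> (2::nat) ^ expn M k" using expn_ge[of k M] by (intro power_increasing) auto
  also have "\<dots> \<le> denom k" unfolding denom_def using p_ge_2 by (intro power_mono) auto
  finally show ?thesis using less_exp[of k] by linarith
qed

lemma p_dvd_denom: "p dvd denom k" unfolding denom_def using expn_pos[of M k] by (simp add: dvd_power)

lemma denom_strict: "j < k \<Longrightarrow> denom j < denom k"
  unfolding denom_def using p_ge_2 expn_strict[of j k M] by (intro power_strict_increasing) auto

lemma denom_powr: "real (denom k) powr a = real p powr (real (expn M k) * a)"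
  unfolding denom_def using p_ge_2 by (simp add: powr_powr powr_realpow[symmetric])

lemma tail_small:
  assumes "kap \<ge> 0" "real j \<ge> kap"
  shows "tail d j < real (denom j) powr (- kap)"
proof -
  have p1: "real p > 1" using p_ge_2 by simp
  have "(4::real) \<le> real p * real p" using p_ge_2 mult_mono[of 2 "real p" 2 "real p"] by simp
  then have "(4::real) * p \<le> real p ^ 3"
    unfolding power3_eq_cube using p1 by (intro mult_right_mono) auto
  then have "4 * p / real p ^ expn M (Suc j) \<le> real p ^ 3 / real p ^ expn M (Suc j)"
    by (intro divide_right_mono) auto
  then have "tail d j \<le> real p ^ 3 / real p ^ expn M (Suc j)"
    using tail_le[of d j] by linarith
  also have "\<dots> = real p powr (3 - real (expn M (Suc j)))"
    using p1 powr_realpow[of "real p" 3] powr_realpow[of "real p" "expn M (Suc j)"]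
    by (simp only: powr_diff) simp
  also have "\<dots> < real p powr (real (expn M j) * (- kap))"
    using expn_eventually_large[OF assms, of M] p1 by (intro powr_less_mono) (auto simp: mult.commute)
  also have "\<dots> = real (denom j) powr (- kap)" by (simp only: denom_powr)
  finally show ?thesis .
qed

lemma xval_irrational: "xval d \<notin> \<rat>"
proof
  assume "xval d \<in> \<rat>"
  then obtain a :: int and b :: nat where ab: "b > 0" "xval d = real_of_int a / real b"
    by (metis Rats_cases' of_int_of_nat_eq zero_less_imp_eq_int)
  define j where "j = max 2 b"
  have dist: "\<bar>real_of_int a / real b - real_of_int (int (numer d j)) / real (denom j)\<bar> = tail d j"
    using xval_minus_partial[of d j] ab by simp
  then have "real_of_int a / real b \<noteq> real_of_int (int (numer d j)) / real (denom j)"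
    using tail_pos[of d j] by auto
  then have "1 / (real b * real (denom j))
      \<le> \<bar>real_of_int a / real b - real_of_int (int (numer d j)) / real (denom j)\<bar>"
    by (rule fraction_separation[OF ab(1) denom_pos])
  also have "\<dots> = tail d j" by (rule dist)
  also have "\<dots> < real (denom j) powr (- 2)" by (rule tail_small) (auto simp: j_def)
  also have "\<dots> = 1 / (real (denom j) * real (denom j))"
    using denom_pos[of j] by (simp add: powr_minus powr_realpow[symmetric] power2_eq_square divide_inverse)
  finally have "real (denom j) < real b" using denom_pos[of j] ab(1) by (simp add: field_simps)
  moreover have "b \<le> denom j" using denom_gt[of j] unfolding j_def by linarith
  ultimately show False by simp
qed

lemma xval_liouville: "liouville_number (xval d)"
  unfolding liouville_number_def
proof (intro conjI allI impI)
  show "xval d \<notin> \<rat>" by (rule xval_irrational)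
  fix k :: real assume k: "k > 0"
  obtain j :: nat where j: "real j \<ge> k" using real_arch_simple by blast
  then have "j \<ge> 1" using k by (cases j) auto
  then have q2: "int (denom j) \<ge> 2" using denom_gt[of j] by linarith
  show "\<exists>a b. 2 \<le> b \<and> 0 < \<bar>xval d - real_of_int a / real_of_int b\<bar> \<and>
          \<bar>xval d - real_of_int a / real_of_int b\<bar> < real_of_int b powr - k"
    using q2 xval_minus_partial[of d j] tail_pos[of d j] tail_small[of k j d] k j
    by (intro exI[of _ "int (numer d j)"] exI[of _ "int (denom j)"]) auto
qed

lemma infinite_approx_multiples:
  assumes "tau \<ge> 0"
  shows "infinite {q. q \<ge> 1 \<and> p dvd q \<and> approx_den tau (xval d) q}"
proof -
  have "denom ` {j. real j \<ge> tau} \<subseteq> {q. q \<ge> 1 \<and> p dvd q \<and> approx_den tau (xval d) q}"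
  proof safe
    fix j assume j: "real j \<ge> tau"
    show "1 \<le> denom j" using denom_pos[of j] by simp
    show "p dvd denom j" by (rule p_dvd_denom)
    show "approx_den tau (xval d) (denom j)" unfolding approx_den_def
      using xval_minus_partial[of d j] tail_small[OF assms j] by (intro exI[of _ "int (numer d j)"]) simp
  qed
  moreover have "inj_on denom {j. real j \<ge> tau}"
    by (rule strict_mono_imp_inj_on) (auto simp: strict_mono_def denom_strict)
  moreover have "infinite {j::nat. real j \<ge> tau}"
    using infinite_Ici[of "nat \<lceil>tau\<rceil>"] by (rule infinite_super[rotated]) auto
  ultimately show ?thesis using finite_imageD infinite_super by blast
qed

lemma fraction_ne_partial:
  assumes "s > 0" "\<not> p dvd s"
  shows "real_of_int b / real s \<noteq> real_of_int (int (numer d k)) / real (denom k)"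
proof
  assume "real_of_int b / real s = real_of_int (int (numer d k)) / real (denom k)"
  then have "real_of_int (b * int (denom k)) = real_of_int (int (numer d k) * int s)"
    using assms denom_pos[of k] by (simp add: field_simps)
  then have eq: "b * int (denom k) = int (numer d k) * int s" by (simp only: of_int_eq_iff)
  have "int p dvd b * int (denom k)" using p_dvd_denom[of k] by simp
  then have "int p dvd int (numer d k) * int s" using eq by simp
  then have "int p dvd int (numer d k) \<or> int p dvd int s"
    using prime_p prime_dvd_mult_iff[of "int p"] by simp
  then show False using assms(2) numer_not_dvd[of d k] by simp
qed

lemma bracket_denom:
  assumes "S \<ge> 2 * real p"
  obtains k where "2 * real (denom k) \<le> S" "S < 2 * real (denom (Suc k))"
proof -
  have ex: "\<exists>m. S < 2 * real (denom m)"
    using denom_gt[of "nat \<lceil>S\<rceil>"] by (intro exI[of _ "nat \<lceil>S\<rceil>"]) linarith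
  define m0 where "m0 = (LEAST m. S < 2 * real (denom m))"
  have m0: "S < 2 * real (denom m0)" unfolding m0_def using ex by (rule LeastI_ex)
  have "m0 \<noteq> 0"
  proof
    assume "m0 = 0"
    then show False using m0 assms by (simp add: denom_def)
  qed
  then obtain k where k: "m0 = Suc k" by (cases m0) auto
  have "2 * real (denom k) \<le> S"
    using not_less_Least[of k "\<lambda>m. S < 2 * real (denom m)"] k unfolding m0_def[symmetric] by simp
  with m0 k show thesis by (intro that) auto
qed

text \<open>The key growth estimate: if \<open>s^\<sigma> < 2 denom (k+1)\<close> then \<open>8 p s denom k < denom (k+1)\<close>,
  provided \<open>M (1 - 1/\<sigma>) \<ge> 1\<close>, i.e.\ the exponents grow at least by the factor \<open>\<sigma>/(\<sigma>-1)\<close>.\<close>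
lemma next_denom_dominates:
  assumes sig: "sig > 1" and Mc: "real M * (1 - 1/sig) \<ge> 1"
    and s: "real s > 0" "real s powr sig < 2 * real (denom (Suc k))"
  shows "8 * real p * real s * real (denom k) < real (denom (Suc k))"
proof -
  define N where "N = real (denom k)"
  define N' where "N' = real (denom (Suc k))"
  define a where "a = 1 / sig"
  have Npos: "N > 0" "N' > 0" unfolding N_def N'_def using denom_pos by auto
  have a01: "0 < a" "a < 1" unfolding a_def using sig by auto
  have "real s = (real s powr sig) powr a" unfolding a_def using sig s by (simp add: powr_powr)
  also have "\<dots> < (2 * N') powr a" using s a01 unfolding N'_def by (intro powr_less_mono2) auto
  also have "\<dots> = 2 powr a * N' powr a" using Npos by (simp add: powr_mult)
  also have "\<dots> \<le> 2 * N' powr a"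
    using powr_mono[of a 1 2] a01 by (intro mult_right_mono) auto
  finally have sN: "real s < 2 * N' powr a" .
  have "real (M * (expn M k + 6)) \<le> real (expn M (Suc k))"
    unfolding of_nat_le_iff by (rule expn_Suc_ge) simp
  then have "real M * (real (expn M k) + 6) \<le> real (expn M (Suc k))" by simp
  then have "(real M * (1 - a)) * (real (expn M k) + 6) \<le> real (expn M (Suc k)) * (1 - a)"
    using a01 by (simp add: mult_right_mono mult_ac)
  moreover have "1 * (real (expn M k) + 6) \<le> (real M * (1 - a)) * (real (expn M k) + 6)"
    using Mc unfolding a_def by (intro mult_right_mono) auto
  ultimately have expo: "real (expn M k) + 6 \<le> real (expn M (Suc k)) * (1 - a)"
    by (metis mult_1 order_trans)
  have "16 * real p \<le> real p ^ 5 * real p"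
    using pow_ge_2pow[of 5] p_ge_2 mult_right_mono[of "2^5" "real p ^ 5" "real p"] by simp
  also have "\<dots> = real p ^ 6" using power_Suc2[of "real p" 5] by simp
  finally have "16 * real p * N \<le> real p ^ 6 * N" using Npos by simp
  also have "\<dots> = real p powr (real (expn M k) + 6)"
  proof -
    have "real p powr (real (expn M k) + 6) = real p powr real (expn M k) * real p powr real (6::nat)"
      by (simp add: powr_add)
    also have "\<dots> = real p ^ expn M k * real p ^ 6"
      using p_ge_2 by (simp only: powr_realpow of_nat_0_less_iff)
    finally show ?thesis by (simp add: N_def denom_def)
  qed
  also have "\<dots> \<le> N' powr (1 - a)"
    unfolding N'_def denom_powr using expo p_ge_2 by (intro powr_mono) auto
  finally have big: "16 * real p * N \<le> N' powr (1 - a)" .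
  have "8 * real p * real s * N < 8 * real p * (2 * N' powr a) * N"
    using sN p_ge_2 Npos by (intro mult_strict_right_mono mult_strict_left_mono) auto
  also have "\<dots> = N' powr a * (16 * real p * N)" by (simp add: mult_ac)
  also have "\<dots> \<le> N' powr a * N' powr (1 - a)" using big by (intro mult_left_mono) auto
  also have "\<dots> = N'" using Npos by (simp flip: powr_add)
  finally show ?thesis unfolding N_def N'_def .
qed

text \<open>Denominators \<open>s \<ge> 2p\<close> prime to \<open>p\<close> never give an approximation of order \<open>\<sigma> + 1\<close>:
  compare \<open>b/s\<close> with the partial sum whose denominator is of size about \<open>s^\<sigma>\<close>.\<close>
lemma no_coprime_approx:
  assumes sig: "sig > 1" and Mc: "real M * (1 - 1/sig) \<ge> 1"
    and s: "s \<ge> 2 * p" "\<not> p dvd s"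
  shows "\<bar>xval d - real_of_int b / real s\<bar> \<ge> real s powr (-(sig + 1))"
proof -
  have s2p: "real s \<ge> 2 * real p" and s2: "real s \<ge> 2" using s p_ge_2 by simp_all
  define S where "S = real s powr sig"
  have "real s powr 1 \<le> S" unfolding S_def using s2 sig by (intro powr_mono) auto
  then have "S \<ge> 2 * real p" using s2 s2p by simp
  then obtain k where Sk: "2 * real (denom k) \<le> S" and SSk: "S < 2 * real (denom (Suc k))"
    by (rule bracket_denom)
  define N where "N = real (denom k)"
  have Npos: "N > 0" unfolding N_def using denom_pos by auto
  have "1 / (real s * N) \<le> \<bar>real_of_int b / real s - real (numer d k) / N\<bar>"
    using fraction_separation[OF _ denom_pos fraction_ne_partial[of s b d k]] s s2
    unfolding N_def by simp
  also have "\<dots> \<le> \<bar>xval d - real_of_int b / real s\<bar> + tail d k"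
    using xval_minus_partial[of d k] unfolding N_def by simp
  finally have sepk: "1 / (real s * N) \<le> \<bar>xval d - real_of_int b / real s\<bar> + tail d k" .
  have "real s powr (sig + 1) = S * real s" unfolding S_def using s2 by (simp add: powr_add)
  then have "real s powr (-(sig + 1)) = 1 / (S * real s)" by (metis powr_minus inverse_eq_divide)
  also have "\<dots> \<le> 1 / (2 * N * real s)"
    using Sk Npos s2 unfolding N_def by (intro divide_left_mono mult_right_mono) auto
  finally have err: "real s powr (-(sig + 1)) \<le> 1 / (2 * real s * N)" by (simp add: mult_ac)
  have "8 * real p * real s * N < real (denom (Suc k))"
    using next_denom_dominates[OF sig Mc, of s k] SSk s2 unfolding S_def N_def by simp
  then have "4 * real p / real (denom (Suc k)) < 1 / (2 * real s * N)"
    using Npos s2 denom_pos[of "Suc k"] by (simp add: field_simps)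
  then have "tail d k < 1 / (2 * real s * N)"
    using tail_le[of d k] unfolding denom_def by simp
  moreover have "1 / (real s * N) = 2 * (1 / (2 * real s * N))" by simp
  ultimately show ?thesis using sepk err by (smt (verit))
qed

lemma finite_coprime_approx:
  assumes "sig > 1" "real M * (1 - 1/sig) \<ge> 1"
  shows "finite {q. \<not> p dvd q \<and> approx_den (sig + 1) (xval d) q}"
proof (rule finite_subset[of _ "{..<2*p}"])
  show "{q. \<not> p dvd q \<and> approx_den (sig + 1) (xval d) q} \<subseteq> {..<2 * p}"
    using no_coprime_approx[OF assms] unfolding approx_den_def
    by (auto simp: not_less[symmetric] minus_add_distrib)
qed simp

text \<open>The map \<open>d \<mapsto> x_d\<close> is injective: at the first index where two sequences differ the
  partial sums differ by \<open>p^(1 - e_k)\<close>, which beats the difference of the tails.\<close>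
lemma inj_xval: "inj xval"
proof
  fix d d' assume eq: "xval d = xval d'"
  show "d = d'"
  proof (rule ccontr)
    assume "d \<noteq> d'"
    then have ex: "\<exists>k. d k \<noteq> d' k" by auto
    define k where "k = (LEAST k. d k \<noteq> d' k)"
    have dk: "d k \<noteq> d' k" unfolding k_def using ex by (rule LeastI_ex)
    have "j < k \<Longrightarrow> d j = d' j" for j unfolding k_def using not_less_Least by blast
    then have "partial d k - partial d' k = summand d k - summand d' k"
      unfolding partial_def summand_def by simp
    moreover have "\<bar>summand d k - summand d' k\<bar> = real p / real p ^ expn M k"
      using dk unfolding summand_def digit_def by (cases "d k") (auto simp: diff_divide_distrib[symmetric])
    moreover have "\<bar>tail d k - tail d' k\<bar> < 4 * real p / real p ^ expn M (Suc k)"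
      using tail_pos[of d k] tail_pos[of d' k] tail_le[of d k] tail_le[of d' k] by linarith
    moreover have "4 * real p / real p ^ expn M (Suc k) \<le> real p / real p ^ expn M k"
    proof -
      have "real p ^ (expn M k + 2) \<le> real p ^ expn M (Suc k)"
        using expn_step[of M k] p_ge_2 by (intro power_increasing) auto
      moreover have "4 * real p ^ expn M k \<le> real p ^ (expn M k + 2)"
        using pow_ge_2pow[of 2] p_ge_2 by (simp add: power_add mult.commute mult_left_mono power2_eq_square)
      ultimately have "4 * real p ^ expn M k \<le> real p ^ expn M (Suc k)" by linarith
      then show ?thesis using p_ge_2 by (simp add: field_simps)
    qed
    moreover have "partial d k + tail d k = partial d' k + tail d' k"
      using eq xval_split[of d k] xval_split[of d' k] by simp
    ultimately show False by linarith
  qed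
qed

end

theorem theorem2:
  fixes P :: "nat set" and tau :: real
  assumes "\<forall>p\<in>P. prime p"
    and "\<exists>p1\<in>P. \<exists>p2\<in>P. p1 \<noteq> p2"
    and "tau > 2"
  shows "uncountable {x \<in> W_star tau P. liouville_number x}"
proof -
  obtain p where pP: "p \<in> P" using assms(2) by blast
  define sig where "sig = tau - 1"
  have sig: "sig > 1" "tau = sig + 1" using assms(3) unfolding sig_def by simp_all
  define M where "M = nat \<lceil>sig / (sig - 1)\<rceil>"
  have "real M \<ge> sig / (sig - 1)" unfolding M_def by linarith
  then have Mc: "real M * (1 - 1 / sig) \<ge> 1" using sig by (simp add: field_simps)
  interpret lacunary_series p M using assms(1) pP by unfold_locales blast
  have not_Q: "q \<notin> Qset P \<longleftrightarrow> q \<ge> 1 \<longrightarrow> (\<exists>p'\<in>P. p' dvd q)" for q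
    unfolding Qset_def by auto
  have "xval d \<in> W_star tau P" for d
  proof -
    have "infinite {q. q \<ge> 1 \<and> q \<notin> Qset P \<and> approx_den tau (xval d) q}"
      by (rule infinite_super[OF _ infinite_approx_multiples[of tau d]]) (use pP not_Q assms(3) in auto)
    moreover have "finite {q. q \<in> Qset P \<and> approx_den tau (xval d) q}"
      by (rule finite_subset[OF _ finite_coprime_approx[OF sig(1) Mc, of d]])
         (use pP sig(2) in \<open>auto simp: Qset_def\<close>)
    ultimately show ?thesis unfolding W_star_def by blast
  qed
  then have "range xval \<subseteq> {x \<in> W_star tau P. liouville_number x}" using xval_liouville by blast
  moreover have "uncountable (range xval)"
    using uncountable_nat_bool countable_image_inj_on[OF _ inj_xval] by blast
  ultimately show ?thesis using countable_subset by blast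
qed

end
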